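(* Let $P\subseteq\mathbb{R}^n$ be a rational polyhedron, let $f:\mathbb{R}^n\to\mathbb{R}$ be a polynomial of degree at most three, and let $\bar x\in P$ and $\bar v\in\operatorname{rec}P$ be such that $f(\bar x+\lambda\bar v)\to+\infty$ as $\lambda\to+\infty$ with $f(\bar x+\lambda\bar v)=\Theta(\lambda^3)$. Then for every $\epsilon>0$ there exist $\tilde x,\tilde v\in\mathbb{Q}^n$ with $\tilde x\in P$, $\tilde v\in\operatorname{rec}P$, $\|\bar x-\tilde x\|<\epsilon$, $\|\bar v-\tilde v\|<\epsilon$, such that $f(\tilde x+\lambda\tilde v)\to+\infty$ as $\lambda\to+\infty$ and $f(\tilde x+\lambda\tilde v)=\Theta(\lambda^3)$.
   Context: $\operatorname{rec}P$ denotes the recession cone of $P$, and $\|\cdot\|$ is the Euclidean norm. *)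

theory Defs
  imports "HOL-Analysis.Analysis" "HOL-Library.Landau_Symbols"
begin

definition rational_vec :: "real^'n \<Rightarrow> bool" where
  "rational_vec x \<longleftrightarrow> (\<forall>i. x $ i \<in> \<rat>)"

definition rational_polyhedron :: "(real^'n) set \<Rightarrow> bool" where
  "rational_polyhedron P \<longleftrightarrow>
     (\<exists>C :: ((real^'n) \<times> real) set. finite C \<and>
        (\<forall>(a,b)\<in>C. rational_vec a \<and> b \<in> \<rat>) \<and>
        P = {x. \<forall>(a,b)\<in>C. a \<bullet> x \<le> b})"

definition rec_cone :: "(real^'n) set \<Rightarrow> (real^'n) set" where
  "rec_cone P = {v. \<forall>x\<in>P. \<forall>t::real. t \<ge> 0 \<longrightarrow> x + t *\<^sub>R v \<in> P}"

definition poly_deg_le3 :: "(real^'n \<Rightarrow> real) \<Rightarrow> bool" where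
  "poly_deg_le3 f \<longleftrightarrow>
     (\<exists>(c::real) (a::'n \<Rightarrow> real) (B::'n \<Rightarrow> 'n \<Rightarrow> real) (D::'n \<Rightarrow> 'n \<Rightarrow> 'n \<Rightarrow> real).
        \<forall>x. f x = c + (\<Sum>i\<in>UNIV. a i * x $ i)
                 + (\<Sum>i\<in>UNIV. \<Sum>j\<in>UNIV. B i j * x $ i * x $ j)
                 + (\<Sum>i\<in>UNIV. \<Sum>j\<in>UNIV. \<Sum>k\<in>UNIV. D i j k * x $ i * x $ j * x $ k))"

end

theory Submission
  imports Defs
begin

text \<open>Along a ray \<open>x + \<lambda> v\<close>, a polynomial of degree at most three is a cubic in \<open>\<lambda>\<close> whose
  leading coefficient is the cubic form \<open>p\<^sub>3(v)\<close>, and the hypotheses on \<open>vbar\<close> say exactly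
  that \<open>p\<^sub>3(vbar) > 0\<close>; by continuity this persists near \<open>vbar\<close>. It remains to approximate \<open>xbar\<close>
  in \<open>P\<close> and \<open>vbar\<close> in \<open>rec P\<close> (again a rational polyhedron) by rational points.
  For that, write the coordinates of \<open>y\<close> in a finite \<open>\<rat>\<close>-basis of the reals containing \<open>1\<close> and
  move every other basis element to a nearby rational: the resulting \<open>\<rat>\<close>-linear perturbation
  keeps every rational equation \<open>a \<bullet> y = b\<close> satisfied, while strict inequalities survive
  small perturbations.\<close>

definition qscale :: "rat \<Rightarrow> real \<Rightarrow> real" where "qscale q x = of_rat q * x"

interpretation Q: vector_space qscale
  by unfold_locales (simp_all add: qscale_def algebra_simps of_rat_add of_rat_mult)

lemma Q_basis_containing_one:
  assumes "finite S"
  obtains B where "finite B" "1 \<in> B" "Q.independent B" "S \<subseteq> Q.span B"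
proof -
  have "Q.independent {1::real}"
    by (simp add: Q.independent_insert Q.span_empty qscale_def)
  then obtain B where B: "{1} \<subseteq> B" "B \<subseteq> Q.span (insert 1 S)" "Q.independent B"
      "Q.span (insert 1 S) \<subseteq> Q.span B"
    using Q.maximal_independent_subset_extend[of "{1}" "Q.span (insert 1 S)"]
    by (metis Q.span_base insertI1 insert_subset empty_subsetI)
  have "finite B"
    using Q.independent_span_bound[OF _ B(3,2)] assms by simp
  with B show thesis
    using Q.span_base[of _ "insert 1 S"] by (intro that) auto
qed

definition rational_perturbation :: "real set \<Rightarrow> (real \<Rightarrow> real) \<Rightarrow> real \<Rightarrow> real" where
  "rational_perturbation B s r = (\<Sum>b\<in>B. of_rat (Q.representation B r b) * s b)"

lemma rational_perturbation_in_Rats: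
  "(\<And>b. s b \<in> \<rat>) \<Longrightarrow> rational_perturbation B s r \<in> \<rat>"
  unfolding rational_perturbation_def by (intro Rats_sum Rats_mult) auto

lemma rational_perturbation_sum:
  assumes "Q.independent B" "\<And>i. r i \<in> Q.span B"
  shows "rational_perturbation B s (\<Sum>i\<in>I. of_rat (q i) * r i)
           = (\<Sum>i\<in>I. of_rat (q i) * rational_perturbation B s (r i))"
proof -
  have "Q.representation B (\<Sum>i\<in>I. qscale (q i) (r i)) = (\<lambda>b. \<Sum>i\<in>I. q i * Q.representation B (r i) b)"
    using assms by (simp add: Q.representation_sum Q.span_scale Q.representation_scale)
  then show ?thesis
    by (simp add: qscale_def rational_perturbation_def of_rat_sum of_rat_mult sum_distrib_left
        sum_distrib_right mult.assoc sum.swap[of _ B])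
qed

lemma rational_perturbation_Rats:
  assumes "finite B" "1 \<in> B" "Q.independent B" "s 1 = 1" "c \<in> \<rat>"
  shows "rational_perturbation B s c = c"
proof -
  obtain q where q: "c = qscale q 1"
    using assms(5) by (auto simp: qscale_def elim: Rats_cases)
  have "Q.representation B c = (\<lambda>b. if b = 1 then q else 0)"
    using assms(2,3) by (auto simp: q Q.representation_scale Q.representation_basis Q.span_base)
  then have "rational_perturbation B s c = (\<Sum>b\<in>B. if b = 1 then of_rat q * s b else 0)"
    unfolding rational_perturbation_def by (intro sum.cong) auto
  then show ?thesis
    using assms(1,2,4) by (simp add: q qscale_def)
qed

lemma rational_perturbation_tendsto:
  assumes "finite B" "Q.independent B" "r \<in> Q.span B" "\<And>b. (\<lambda>n. s n b) \<longlonglongrightarrow> b"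
  shows "(\<lambda>n. rational_perturbation B (s n) r) \<longlonglongrightarrow> r"
proof -
  have "(\<lambda>n. rational_perturbation B (s n) r) \<longlonglongrightarrow> (\<Sum>b\<in>B. of_rat (Q.representation B r b) * b)"
    unfolding rational_perturbation_def by (intro tendsto_intros assms(4))
  also have "(\<Sum>b\<in>B. of_rat (Q.representation B r b) * b) = r"
    using Q.sum_representation_eq[OF assms(2,3,1) order_refl] by (simp add: qscale_def)
  finally show ?thesis .
qed

lemma rational_vec_approximation_preserving_relations:
  fixes y :: "real^'n"
  obtains y' where "\<And>n. rational_vec (y' n)" "y' \<longlonglongrightarrow> y"
    "\<And>n a. rational_vec a \<Longrightarrow> a \<bullet> y \<in> \<rat> \<Longrightarrow> a \<bullet> y' n = a \<bullet> y"
proof -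
  obtain B where B: "finite B" "1 \<in> B" "Q.independent B" "range (\<lambda>i. y $ i) \<subseteq> Q.span B"
    using Q_basis_containing_one[of "range (\<lambda>i. y $ i)"] by (metis finite finite_imageI)
  have "\<forall>b::real. \<exists>r. (\<forall>n. r n \<in> \<rat>) \<and> r \<longlonglongrightarrow> b"
    by (metis Rats_closure_real UNIV_I closure_sequential)
  then obtain r :: "real \<Rightarrow> nat \<Rightarrow> real" where r: "\<And>b n. r b n \<in> \<rat>" "\<And>b. r b \<longlonglongrightarrow> b"
    by metis
  define s where "s n b = (if b \<in> \<rat> then b else r b n)" for n b
  have s_Rats: "s n b \<in> \<rat>" for n b
    using r(1) by (simp add: s_def)
  have s_tendsto: "(\<lambda>n. s n b) \<longlonglongrightarrow> b" for b
    using r(2) by (cases "b \<in> \<rat>") (simp_all add: s_def)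
  have y_span: "y $ i \<in> Q.span B" for i
    using B(4) by blast
  define y' where "y' n = (\<chi> i. rational_perturbation B (s n) (y $ i))" for n
  show thesis
  proof
    show "rational_vec (y' n)" for n
      by (simp add: rational_vec_def y'_def rational_perturbation_in_Rats s_Rats)
    show "y' \<longlonglongrightarrow> y"
      unfolding y'_def by (rule vec_tendstoI) (simp add: rational_perturbation_tendsto[OF B(1,3) y_span s_tendsto])
    fix n and a :: "real^'n"
    assume "rational_vec a" "a \<bullet> y \<in> \<rat>"
    then have "\<forall>i. \<exists>q. a $ i = of_rat q"
      unfolding rational_vec_def by (blast elim: Rats_cases)
    then obtain q where q: "\<And>i. a $ i = of_rat (q i)"
      by metis
    have "a \<bullet> y' n = (\<Sum>i\<in>UNIV. of_rat (q i) * rational_perturbation B (s n) (y $ i))"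
      by (simp add: inner_vec_def y'_def q)
    also have "\<dots> = rational_perturbation B (s n) (a \<bullet> y)"
      by (simp add: inner_vec_def q rational_perturbation_sum[OF B(3) y_span])
    also have "\<dots> = a \<bullet> y"
      using B \<open>a \<bullet> y \<in> \<rat>\<close> by (intro rational_perturbation_Rats) (auto simp: s_def)
    finally show "a \<bullet> y' n = a \<bullet> y" .
  qed
qed

lemma rational_points_dense_in_rational_polyhedron:
  assumes "rational_polyhedron P" "y \<in> P" "\<epsilon> > 0"
  shows "\<exists>y'. rational_vec y' \<and> y' \<in> P \<and> norm (y - y') < \<epsilon>"
proof -
  obtain C where C: "finite C" "\<forall>(a,b)\<in>C. rational_vec a \<and> b \<in> \<rat>" "P = {x. \<forall>(a,b)\<in>C. a \<bullet> x \<le> b}"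
    using assms(1) unfolding rational_polyhedron_def by blast
  obtain y' where y': "\<And>n. rational_vec (y' n)" "y' \<longlonglongrightarrow> y"
      "\<And>n a. rational_vec a \<Longrightarrow> a \<bullet> y \<in> \<rat> \<Longrightarrow> a \<bullet> y' n = a \<bullet> y"
    using rational_vec_approximation_preserving_relations[of y] by blast
  have "eventually (\<lambda>n. a \<bullet> y' n \<le> b) sequentially" if ab: "(a,b) \<in> C" for a b
  proof (cases "a \<bullet> y = b")
    case True
    then show ?thesis using C(2) ab y'(3) by auto
  next
    case False
    with assms(2) C(3) ab have "a \<bullet> y < b" by fastforce
    moreover have "(\<lambda>n. a \<bullet> y' n) \<longlonglongrightarrow> a \<bullet> y" by (intro tendsto_intros y'(2))
    ultimately have "eventually (\<lambda>n. a \<bullet> y' n < b) sequentially" by (rule order_tendstoD(2)[rotated])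
    then show ?thesis by eventually_elim simp
  qed
  then have "eventually (\<lambda>n. y' n \<in> P) sequentially"
    unfolding C(3) case_prod_beta using C(1) by (auto intro: eventually_ball_finite)
  moreover have "eventually (\<lambda>n. norm (y - y' n) < \<epsilon>) sequentially"
    using tendstoD[OF y'(2) assms(3)] by (simp add: dist_commute dist_norm)
  ultimately obtain n where "y' n \<in> P" "norm (y - y' n) < \<epsilon>"
    using eventually_happens'[OF sequentially_bot] eventually_conj by blast
  with y'(1) show ?thesis
    by blast
qed

lemma rec_cone_polyhedron:
  assumes P: "P = {x. \<forall>(a,b)\<in>C. a \<bullet> x \<le> b}" and "x \<in> P"
  shows "rec_cone P = {v. \<forall>(a,b)\<in>C. a \<bullet> v \<le> 0}"
proof (intro set_eqI iffI)
  fix v assume v: "v \<in> rec_cone P"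
  show "v \<in> {v. \<forall>(a,b)\<in>C. a \<bullet> v \<le> 0}"
  proof (clarsimp, rule ccontr)
    fix a b assume ab: "(a, b) \<in> C" and "\<not> a \<bullet> v \<le> 0"
    then have pos: "a \<bullet> v > 0" by simp
    define t where "t = (b - a \<bullet> x) / (a \<bullet> v) + 1"
    have "a \<bullet> x \<le> b" using assms ab by auto
    then have "t \<ge> 0" using pos by (simp add: t_def)
    then have "a \<bullet> (x + t *\<^sub>R v) \<le> b"
      using v \<open>x \<in> P\<close> ab unfolding rec_cone_def P by blast
    moreover have "a \<bullet> (x + t *\<^sub>R v) = b + a \<bullet> v"
      using pos by (simp add: t_def inner_add_right field_simps)
    ultimately show False using pos by simp
  qed
next
  fix v assume "v \<in> {v. \<forall>(a,b)\<in>C. a \<bullet> v \<le> 0}"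
  then have "a \<bullet> (y + t *\<^sub>R v) \<le> b" if "(a,b) \<in> C" "y \<in> P" "t \<ge> 0" for a b y t
  proof -
    have "a \<bullet> y \<le> b" "t * (a \<bullet> v) \<le> 0"
      using that \<open>v \<in> _\<close> P by (auto intro: mult_nonneg_nonpos)
    then show ?thesis by (simp add: inner_add_right)
  qed
  then show "v \<in> rec_cone P"
    unfolding rec_cone_def P by blast
qed

lemma rational_polyhedron_rec_cone:
  assumes "rational_polyhedron P" "x \<in> P"
  shows "rational_polyhedron (rec_cone P)"
proof -
  obtain C where C: "finite C" "\<forall>(a,b)\<in>C. rational_vec a \<and> b \<in> \<rat>" "P = {x. \<forall>(a,b)\<in>C. a \<bullet> x \<le> b}"
    using assms(1) unfolding rational_polyhedron_def by blast
  have "rec_cone P = {v. \<forall>(a,b)\<in>(\<lambda>(a,b). (a, 0)) ` C. a \<bullet> v \<le> b}"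
    using rec_cone_polyhedron[OF C(3) assms(2)] by auto
  then show ?thesis
    unfolding rational_polyhedron_def using C(1,2) by (intro exI[of _ "(\<lambda>(a,b). (a, 0)) ` C"]) auto
qed

definition cubic_with_lead :: "(real \<Rightarrow> real) \<Rightarrow> real \<Rightarrow> bool" where
  "cubic_with_lead g c \<longleftrightarrow> (\<exists>p0 p1 p2. \<forall>l. g l = p0 + p1 * l + p2 * l ^ 2 + c * l ^ 3)"

lemma cubic_with_lead_add:
  assumes "cubic_with_lead g c" "cubic_with_lead h d"
  shows "cubic_with_lead (\<lambda>l. g l + h l) (c + d)"
proof -
  obtain p0 p1 p2 q0 q1 q2 where "\<forall>l. g l = p0 + p1 * l + p2 * l ^ 2 + c * l ^ 3"
      "\<forall>l. h l = q0 + q1 * l + q2 * l ^ 2 + d * l ^ 3"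
    using assms unfolding cubic_with_lead_def by blast
  then show ?thesis
    unfolding cubic_with_lead_def
    by (intro exI[of _ "p0 + q0"] exI[of _ "p1 + q1"] exI[of _ "p2 + q2"]) (simp add: algebra_simps)
qed

lemma cubic_with_lead_const: "cubic_with_lead (\<lambda>l. c) 0"
  unfolding cubic_with_lead_def by (intro exI[of _ c] exI[of _ 0]) simp

lemma cubic_with_lead_sum:
  "(\<And>i. i \<in> A \<Longrightarrow> cubic_with_lead (g i) (c i)) \<Longrightarrow>
    cubic_with_lead (\<lambda>l. \<Sum>i\<in>A. g i l) (\<Sum>i\<in>A. c i)"
  by (induction A rule: infinite_finite_induct) (auto simp: cubic_with_lead_add cubic_with_lead_const)

lemma cubic_with_lead_sum_zero:
  "(\<And>i. i \<in> A \<Longrightarrow> cubic_with_lead (g i) 0) \<Longrightarrow> cubic_with_lead (\<lambda>l. \<Sum>i\<in>A. g i l) 0"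
  using cubic_with_lead_sum[of A g "\<lambda>_. 0"] by simp

lemma cubic_with_lead_affine: "cubic_with_lead (\<lambda>l. a * (x + l * v)) 0"
  unfolding cubic_with_lead_def by (intro exI[of _ "a * x"] exI[of _ "a * v"] exI[of _ 0]) (simp add: algebra_simps)

lemma cubic_with_lead_quadratic: "cubic_with_lead (\<lambda>l. b * (x + l * v) * (y + l * w)) 0"
  unfolding cubic_with_lead_def
  by (intro exI[of _ "b * x * y"] exI[of _ "b * (x * w + v * y)"] exI[of _ "b * v * w"])
     (simp add: algebra_simps power2_eq_square)

lemma cubic_with_lead_cubic:
  "cubic_with_lead (\<lambda>l. d * (x + l * v) * (y + l * w) * (z + l * u)) (d * v * w * u)"
  unfolding cubic_with_lead_def
  by (intro exI[of _ "d * x * y * z"] exI[of _ "d * (v * y * z + x * w * z + x * y * u)"]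
        exI[of _ "d * (v * w * z + v * y * u + x * w * u)"])
     (simp add: algebra_simps power2_eq_square power3_eq_cube)

lemma poly_deg_le3_along_rays:
  assumes "poly_deg_le3 f"
  obtains p where "continuous_on UNIV p" "\<And>x v. cubic_with_lead (\<lambda>l. f (x + l *\<^sub>R v)) (p v)"
proof -
  obtain c a B D where f: "\<And>x. f x = c + (\<Sum>i\<in>UNIV. a i * x $ i)
        + (\<Sum>i\<in>UNIV. \<Sum>j\<in>UNIV. B i j * x $ i * x $ j)
        + (\<Sum>i\<in>UNIV. \<Sum>j\<in>UNIV. \<Sum>k\<in>UNIV. D i j k * x $ i * x $ j * x $ k)"
    using assms unfolding poly_deg_le3_def by blast
  define p where "p v = (\<Sum>i\<in>UNIV. \<Sum>j\<in>UNIV. \<Sum>k\<in>UNIV. D i j k * v $ i * v $ j * v $ k)"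
    for v :: "real^'a"
  show thesis
  proof
    show "continuous_on UNIV p"
      unfolding p_def by (intro continuous_intros)
    fix x v :: "real^'a"
    have "cubic_with_lead (\<lambda>l. c + (\<Sum>i\<in>UNIV. a i * (x $ i + l * v $ i))
        + (\<Sum>i\<in>UNIV. \<Sum>j\<in>UNIV. B i j * (x $ i + l * v $ i) * (x $ j + l * v $ j))
        + (\<Sum>i\<in>UNIV. \<Sum>j\<in>UNIV. \<Sum>k\<in>UNIV.
             D i j k * (x $ i + l * v $ i) * (x $ j + l * v $ j) * (x $ k + l * v $ k)))
      (0 + 0 + 0 + p v)"
      unfolding p_def
      by (intro cubic_with_lead_add cubic_with_lead_const cubic_with_lead_sum_zero
          cubic_with_lead_sum cubic_with_lead_affine cubic_with_lead_quadratic cubic_with_lead_cubic)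
    then show "cubic_with_lead (\<lambda>l. f (x + l *\<^sub>R v)) (p v)"
      by (simp add: f)
  qed
qed

lemma cubic_with_lead_ratio_tendsto:
  assumes "cubic_with_lead g c"
  shows "((\<lambda>l. g l / l ^ 3) \<longlongrightarrow> c) at_top"
proof -
  obtain p0 p1 p2 where g: "\<And>l. g l = p0 + p1 * l + p2 * l ^ 2 + c * l ^ 3"
    using assms unfolding cubic_with_lead_def by blast
  have "((\<lambda>l::real. inverse l) \<longlongrightarrow> 0) at_top"
    by (rule tendsto_inverse_0_at_top[OF filterlim_ident])
  then have "((\<lambda>l::real. p0 * inverse l ^ 3 + p1 * inverse l ^ 2 + p2 * inverse l + c)
          \<longlongrightarrow> p0 * 0 ^ 3 + p1 * 0 ^ 2 + p2 * 0 + c) at_top"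
    by (intro tendsto_intros)
  moreover have "eventually (\<lambda>l::real.
      p0 * inverse l ^ 3 + p1 * inverse l ^ 2 + p2 * inverse l + c = g l / l ^ 3) at_top"
    using eventually_gt_at_top[of 0]
    by eventually_elim (simp add: g field_simps power2_eq_square power3_eq_cube)
  ultimately show ?thesis
    by (simp add: Lim_transform_eventually)
qed

lemma cubic_with_lead_at_top_iff:
  assumes "cubic_with_lead g c"
  shows "filterlim g at_top at_top \<and> g \<in> \<Theta>(\<lambda>l. l ^ 3) \<longleftrightarrow> c > 0"
proof -
  have lim: "((\<lambda>l. g l / l ^ 3) \<longlongrightarrow> c) at_top"
    using assms by (rule cubic_with_lead_ratio_tendsto)
  have cube_pos: "eventually (\<lambda>l::real. l ^ 3 > 0) at_top"
    using eventually_gt_at_top[of 0] by eventually_elim simp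
  show ?thesis
  proof
    assume "filterlim g at_top at_top \<and> g \<in> \<Theta>(\<lambda>l. l ^ 3)"
    then have top: "filterlim g at_top at_top" and theta: "g \<in> \<Theta>(\<lambda>l. l ^ 3)" by auto
    have "eventually (\<lambda>l. 0 \<le> g l / l ^ 3) at_top"
      using filterlim_at_top_dense[THEN iffD1, OF top, rule_format, of 0] cube_pos
      by eventually_elim simp
    then have "c \<ge> 0"
      using tendsto_lowerbound[OF lim] by simp
    moreover have "c \<noteq> 0"
    proof
      assume "c = 0"
      then have "g \<in> o(\<lambda>l. l ^ 3)"
        using lim cube_pos by (intro smalloI_tendsto) (auto elim: eventually_mono)
      moreover have "(\<lambda>l. l ^ 3) \<in> O(g)"
        using theta by (simp add: bigtheta_sym bigthetaD1)
      ultimately have "eventually (\<lambda>l::real. l ^ 3 = 0) at_top"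
        using landau_o.big_small_asymmetric by blast
      with cube_pos have "eventually (\<lambda>l::real. False) at_top"
        by eventually_elim simp
      then show False by simp
    qed
    ultimately show "c > 0" by simp
  next
    assume "c > 0"
    have "filterlim (\<lambda>l. g l / l ^ 3 * l ^ 3) at_top at_top"
      by (intro filterlim_tendsto_pos_mult_at_top[OF lim \<open>c > 0\<close>] filterlim_pow_at_top filterlim_ident) simp
    moreover have "eventually (\<lambda>l. g l / l ^ 3 * l ^ 3 = g l) at_top"
      using cube_pos by eventually_elim simp
    ultimately have "filterlim g at_top at_top"
      by (simp add: filterlim_cong)
    moreover have "g \<in> \<Theta>(\<lambda>l. l ^ 3)"
      using bigthetaI_tendsto[OF _ lim] \<open>c > 0\<close> by simp
    ultimately show "filterlim g at_top at_top \<and> g \<in> \<Theta>(\<lambda>l. l ^ 3)" ..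
  qed
qed

theorem proposition5:
  fixes P :: "(real^'n) set" and f :: "real^'n \<Rightarrow> real" and xbar vbar :: "real^'n"
  assumes "rational_polyhedron P"
    and "poly_deg_le3 f"
    and "xbar \<in> P" and "vbar \<in> rec_cone P"
    and "filterlim (\<lambda>l::real. f (xbar + l *\<^sub>R vbar)) at_top at_top"
    and "(\<lambda>l::real. f (xbar + l *\<^sub>R vbar)) \<in> \<Theta>(\<lambda>l. l ^ 3)"
    and "\<epsilon> > 0"
  shows "\<exists>xt vt. rational_vec xt \<and> rational_vec vt \<and> xt \<in> P \<and> vt \<in> rec_cone P \<and>
           norm (xbar - xt) < \<epsilon> \<and> norm (vbar - vt) < \<epsilon> \<and>
           filterlim (\<lambda>l::real. f (xt + l *\<^sub>R vt)) at_top at_top \<and>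
           (\<lambda>l::real. f (xt + l *\<^sub>R vt)) \<in> \<Theta>(\<lambda>l. l ^ 3)"
proof -
  obtain p where p_cont: "continuous_on UNIV p"
      and rays: "\<And>x v. cubic_with_lead (\<lambda>l. f (x + l *\<^sub>R v)) (p v)"
    using poly_deg_le3_along_rays[OF assms(2)] by blast
  have "p vbar > 0"
    using cubic_with_lead_at_top_iff[OF rays] assms(5,6) by blast
  then obtain d where "d > 0" and "\<forall>v. dist v vbar < d \<longrightarrow> dist (p v) (p vbar) < p vbar"
    using p_cont unfolding continuous_on_iff by blast
  then have d: "p v > 0" if "norm (vbar - v) < d" for v
  proof -
    have "dist v vbar < d"
      using that dist_norm[of vbar v] dist_commute[of v vbar] by simp
    then have "\<bar>p v - p vbar\<bar> < p vbar"
      using \<open>\<forall>v. dist v vbar < d \<longrightarrow> _\<close> by (simp add: dist_real_def)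
    then show ?thesis by arith
  qed
  obtain xt where xt: "rational_vec xt" "xt \<in> P" "norm (xbar - xt) < \<epsilon>"
    using rational_points_dense_in_rational_polyhedron[OF assms(1,3,7)] by blast
  obtain vt where vt: "rational_vec vt" "vt \<in> rec_cone P" "norm (vbar - vt) < min \<epsilon> d"
    using rational_points_dense_in_rational_polyhedron[OF rational_polyhedron_rec_cone[OF assms(1,3)] assms(4),
        of "min \<epsilon> d"] assms(7) \<open>d > 0\<close> by auto
  then have "p vt > 0"
    using d by simp
  then have "filterlim (\<lambda>l. f (xt + l *\<^sub>R vt)) at_top at_top \<and>
      (\<lambda>l. f (xt + l *\<^sub>R vt)) \<in> \<Theta>(\<lambda>l. l ^ 3)"
    using cubic_with_lead_at_top_iff[OF rays] by blast
  with xt vt show ?thesis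
    by (intro exI[of _ xt] exI[of _ vt]) simp
qed

end
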